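(* Let $k\ge1$, let $D$ be a digraph containing a cylindrical wall $W$ of order $l\ge 3k$ with vertical dicycles $Q_1,\dots,Q_l$. Then for every $(A,B)\in\mathcal{S}_k(D)$ there is exactly one side $X\in\{A,B\}$ such that $X\setminus(A\cap B)$ contains $V(Q_i)$ for some $i\in[l]$. Moreover, the map $\mathsf{big}_W$ sending each $(A,B)\in\mathcal{S}_k(D)$ to this side is a tangle of order $k$.
   Context: The elementary cylindrical $l$-wall has vertices $v_{r,c}$, $r,c\in[2l]$, and edges: for odd $r$, $(v_{r,c},v_{r,c+1})$ ($c\in[2l-1]$); for even $r$, $(v_{r,c+1},v_{r,c})$ ($c\in[2l-1]$); $(v_{r,c},v_{r+1,c})$ for $r$ odd and $c$ even; $(v_{r,c},v_{r+1,c})$ for $r<2l$ even and $c$ odd; and $(v_{2l,c},v_{1,c})$ for $c$ odd. For $j\in[l]$ its $j$-th vertical dicycle is the dicycle using exactly the vertices of columns $2j-1$ and $2j$. A cylindrical $l$-wall is a subdivision of it, with vertical dicycles $Q_1,\dots,Q_l$ the subdivided images of these. A directed separation is $(A,B)$ with $A\cup B=V(D)$ and no edge from $B\setminus A$ to $A\setminus B$; its order is $|A\cap B|$; $\mathcal{S}_k(D)$ is the set of directed separations of order $<k$. An orientation assigns to each $(A,B)\in\mathcal{S}_k$ a big side in $\{A,B\}$, the other being the small side; it is a tangle of order $k$ if no three small sides (of not necessarily distinct separations in $\mathcal{S}_k$) have union $V(D)$. *)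

theory Defs
  imports Main
begin

definition digraph :: "'a set \<Rightarrow> ('a \<times> 'a) set \<Rightarrow> bool" where
  "digraph V E \<longleftrightarrow> finite V \<and> E \<subseteq> V \<times> V"

definition dipath :: "('a \<times> 'a) set \<Rightarrow> 'a list \<Rightarrow> bool" where
  "dipath E p \<longleftrightarrow> p \<noteq> [] \<and> distinct p \<and> (\<forall>i. Suc i < length p \<longrightarrow> (p ! i, p ! Suc i) \<in> E)"

definition inner :: "'a list \<Rightarrow> 'a set" where
  "inner p = set (butlast (tl p))"

definition ewall_V :: "nat \<Rightarrow> (nat \<times> nat) set" where
  "ewall_V l = {(r, c). 1 \<le> r \<and> r \<le> 2 * l \<and> 1 \<le> c \<and> c \<le> 2 * l}"

definition ewall_E :: "nat \<Rightarrow> ((nat \<times> nat) \<times> (nat \<times> nat)) set" where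
  "ewall_E l =
     {((r, c), (r, c + 1)) | r c. odd r \<and> 1 \<le> r \<and> r \<le> 2 * l \<and> 1 \<le> c \<and> c \<le> 2 * l - 1}
   \<union> {((r, c + 1), (r, c)) | r c. even r \<and> 1 \<le> r \<and> r \<le> 2 * l \<and> 1 \<le> c \<and> c \<le> 2 * l - 1}
   \<union> {((r, c), (r + 1, c)) | r c. odd r \<and> 1 \<le> r \<and> r \<le> 2 * l \<and> even c \<and> 1 \<le> c \<and> c \<le> 2 * l}
   \<union> {((r, c), (r + 1, c)) | r c. even r \<and> 1 \<le> r \<and> r < 2 * l \<and> odd c \<and> 1 \<le> c \<and> c \<le> 2 * l}
   \<union> {((2 * l, c), (1, c)) | c. odd c \<and> 1 \<le> c \<and> c \<le> 2 * l}"

text \<open>D = (V,E) contains a cylindrical l-wall, i.e. a subdivision of the elementary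
  cylindrical l-wall: branch vertices phi, and each wall edge e is replaced by a
  directed path P e, internally disjoint from the branch vertices and from each other.\<close>

definition cyl_wall :: "'a set \<Rightarrow> ('a \<times> 'a) set \<Rightarrow> nat
    \<Rightarrow> (nat \<times> nat \<Rightarrow> 'a) \<Rightarrow> ((nat \<times> nat) \<times> (nat \<times> nat) \<Rightarrow> 'a list) \<Rightarrow> bool" where
  "cyl_wall V E l \<phi> P \<longleftrightarrow>
     inj_on \<phi> (ewall_V l) \<and> \<phi> ` ewall_V l \<subseteq> V \<and>
     (\<forall>e \<in> ewall_E l. dipath E (P e) \<and> set (P e) \<subseteq> V \<and>
         hd (P e) = \<phi> (fst e) \<and> last (P e) = \<phi> (snd e) \<and>
         inner (P e) \<inter> \<phi> ` ewall_V l = {}) \<and>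
     (\<forall>e \<in> ewall_E l. \<forall>e' \<in> ewall_E l. e \<noteq> e' \<longrightarrow> inner (P e) \<inter> inner (P e') = {})"

text \<open>Vertex set of the j-th vertical dicycle Q_j: the subdivided image of the dicycle
  on columns 2j-1 and 2j.\<close>

definition vert_cycle :: "nat \<Rightarrow> (nat \<times> nat \<Rightarrow> 'a)
    \<Rightarrow> ((nat \<times> nat) \<times> (nat \<times> nat) \<Rightarrow> 'a list) \<Rightarrow> nat \<Rightarrow> 'a set" where
  "vert_cycle l \<phi> P j =
     \<phi> ` {(r, c) \<in> ewall_V l. c = 2 * j - 1 \<or> c = 2 * j}
   \<union> (\<Union>e \<in> {((r, c), (r', c')) \<in> ewall_E l. (c = 2 * j - 1 \<or> c = 2 * j) \<and> (c' = 2 * j - 1 \<or> c' = 2 * j)}.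
        inner (P e))"

definition dsep :: "'a set \<Rightarrow> ('a \<times> 'a) set \<Rightarrow> 'a set \<Rightarrow> 'a set \<Rightarrow> bool" where
  "dsep V E A B \<longleftrightarrow> A \<union> B = V \<and> (\<forall>(x, y) \<in> E. \<not> (x \<in> B - A \<and> y \<in> A - B))"

definition S_k :: "'a set \<Rightarrow> ('a \<times> 'a) set \<Rightarrow> nat \<Rightarrow> ('a set \<times> 'a set) set" where
  "S_k V E k = {(A, B). dsep V E A B \<and> card (A \<inter> B) < k}"

definition small_side :: "('a set \<times> 'a set \<Rightarrow> 'a set) \<Rightarrow> 'a set \<times> 'a set \<Rightarrow> 'a set" where
  "small_side big s = (if big s = fst s then snd s else fst s)"

definition is_tangle :: "'a set \<Rightarrow> ('a \<times> 'a) set \<Rightarrow> nat \<Rightarrow> ('a set \<times> 'a set \<Rightarrow> 'a set) \<Rightarrow> bool" where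
  "is_tangle V E k big \<longleftrightarrow>
     (\<forall>s \<in> S_k V E k. big s \<in> {fst s, snd s}) \<and>
     (\<forall>s1 \<in> S_k V E k. \<forall>s2 \<in> S_k V E k. \<forall>s3 \<in> S_k V E k.
        small_side big s1 \<union> small_side big s2 \<union> small_side big s3 \<noteq> V)"

definition wall_side :: "nat \<Rightarrow> (nat \<times> nat \<Rightarrow> 'a)
    \<Rightarrow> ((nat \<times> nat) \<times> (nat \<times> nat) \<Rightarrow> 'a list) \<Rightarrow> 'a set \<times> 'a set \<Rightarrow> 'a set \<Rightarrow> bool" where
  "wall_side l \<phi> P s X \<longleftrightarrow> X \<in> {fst s, snd s} \<and>
     (\<exists>i \<in> {1..l}. vert_cycle l \<phi> P i \<subseteq> X - (fst s \<inter> snd s))"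

definition big_W :: "nat \<Rightarrow> (nat \<times> nat \<Rightarrow> 'a)
    \<Rightarrow> ((nat \<times> nat) \<times> (nat \<times> nat) \<Rightarrow> 'a list) \<Rightarrow> 'a set \<times> 'a set \<Rightarrow> 'a set" where
  "big_W l \<phi> P s = (THE X. wall_side l \<phi> P s X)"

end

theory Submission
  imports Defs
begin

text \<open>A vertical dicycle \<open>Q\<^sub>j\<close> is strongly connected and no edge leads from \<open>B - A\<close> to
  \<open>A - B\<close>, so a \<open>Q\<^sub>j\<close> avoiding the separator \<open>A \<inter> B\<close> lies entirely in \<open>A - B\<close> or entirely in
  \<open>B - A\<close>. Two such cycles cannot lie on different sides: the rows of the wall provide \<open>l\<close>
  pairwise disjoint directed paths from the one in \<open>B - A\<close> to the one in \<open>A - B\<close>, each of which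
  must meet \<open>A \<inter> B\<close>, which has fewer than \<open>l\<close> vertices. As the \<open>Q\<^sub>j\<close> are disjoint, fewer than
  \<open>k\<close> of them meet a separator of order \<open>< k\<close>, so some \<open>Q\<^sub>j\<close> avoids it and singles out the big
  side. Three separators together meet fewer than \<open>3k \<le> l\<close> of the cycles, so some \<open>Q\<^sub>j\<close> lies
  in all three big sides and hence outside all three small sides.\<close>

lemma card_le_card_if_disjoint_family_meets:
  assumes "finite S" and meets: "\<And>i. i \<in> I \<Longrightarrow> X i \<inter> S \<noteq> {}"
    and disj: "\<And>i j. i \<in> I \<Longrightarrow> j \<in> I \<Longrightarrow> i \<noteq> j \<Longrightarrow> X i \<inter> X j = {}"
  shows "card I \<le> card S"
proof -
  obtain f where f: "\<And>i. i \<in> I \<Longrightarrow> f i \<in> X i \<inter> S"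
    using bchoice[of I "\<lambda>i x. x \<in> X i \<inter> S"] meets by blast
  have "inj_on f I"
  proof (rule inj_onI, rule ccontr)
    fix i j assume "i \<in> I" "j \<in> I" "f i = f j" "i \<noteq> j"
    then have "f i \<in> X i \<inter> X j"
      using f[of i] f[of j] by simp
    then show False
      using disj \<open>i \<in> I\<close> \<open>j \<in> I\<close> \<open>i \<noteq> j\<close> by auto
  qed
  moreover have "f ` I \<subseteq> S"
    using f by blast
  ultimately show ?thesis
    using card_inj_on_le \<open>finite S\<close> by blast
qed

lemma chain_in_rtrancl:
  assumes "\<And>i. i < n \<Longrightarrow> (f i, f (Suc i)) \<in> R"
  shows "(f 0, f n) \<in> R\<^sup>*"
  using assms by (induction n) (auto intro: rtrancl_into_rtrancl)

lemma cycle_in_rtrancl: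
  assumes step: "\<And>i. i < n \<Longrightarrow> (f i, f (Suc i mod n)) \<in> R" and "i < n" "i' < n"
  shows "(f i, f i') \<in> R\<^sup>*"
proof -
  have "(f i, f ((i + d) mod n)) \<in> R\<^sup>*" for d
  proof (induction d)
    case 0
    then show ?case using \<open>i < n\<close> by simp
  next
    case (Suc d)
    have "(f ((i + d) mod n), f (Suc ((i + d) mod n) mod n)) \<in> R"
      using step \<open>i < n\<close> by simp
    then show ?case
      using Suc.IH by (simp add: mod_Suc_eq rtrancl_into_rtrancl)
  qed
  from this[of "i' + n - i"] show ?thesis
    using assms by simp
qed

lemma dsep_dipath_stays_in_B_minus_A:
  assumes sep: "dsep V E A B" and p: "dipath E p" "set p \<subseteq> V - A \<inter> B"
    and "i \<le> j" "j < length p" "p ! i \<in> B - A"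
  shows "p ! j \<in> B - A"
  using assms(4-)
proof (induction j rule: dec_induct)
  case base
  then show ?case by simp
next
  case (step j)
  have "(p ! j, p ! Suc j) \<in> E"
    using p(1) step.prems by (simp add: dipath_def)
  moreover have "p ! Suc j \<in> V - A \<inter> B"
    using p(2) step.prems nth_mem by blast
  ultimately show ?case
    using sep step unfolding dsep_def by fastforce
qed

lemma dsep_dipath_subset_B_minus_A:
  assumes "dsep V E A B" "dipath E p" "set p \<subseteq> V - A \<inter> B" "hd p \<in> B - A"
  shows "set p \<subseteq> B - A"
proof
  fix x assume "x \<in> set p"
  then obtain j where "j < length p" "x = p ! j"
    by (metis in_set_conv_nth)
  moreover have "p ! 0 \<in> B - A"
    using assms(2,4) by (simp add: dipath_def hd_conv_nth)
  ultimately show "x \<in> B - A"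
    using dsep_dipath_stays_in_B_minus_A[OF assms(1-3)] by blast
qed

lemma dsep_dipath_last_in_B_minus_A:
  assumes "dsep V E A B" "dipath E p" "set p \<subseteq> V - A \<inter> B" "x \<in> set p" "x \<in> B - A"
  shows "last p \<in> B - A"
proof -
  obtain i where "i < length p" "p ! i = x"
    using assms(4) by (metis in_set_conv_nth)
  moreover have "p \<noteq> []"
    using assms(4) by auto
  ultimately show ?thesis
    using dsep_dipath_stays_in_B_minus_A[OF assms(1-3), of i "length p - 1"] assms(5)
    by (simp add: last_conv_nth)
qed

lemma ewall_E_right:
  assumes "odd r" "1 \<le> r" "r \<le> 2 * l" "1 \<le> c" "c < 2 * l"
  shows "((r, c), (r, c + 1)) \<in> ewall_E l"
  using assms unfolding ewall_E_def by simp

lemma ewall_E_left: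
  assumes "even r" "1 \<le> r" "r \<le> 2 * l" "1 \<le> c" "c < 2 * l"
  shows "((r, c + 1), (r, c)) \<in> ewall_E l"
  using assms unfolding ewall_E_def by simp

lemma ewall_E_down_odd_row:
  assumes "odd r" "1 \<le> r" "r \<le> 2 * l" "even c" "1 \<le> c" "c \<le> 2 * l"
  shows "((r, c), (r + 1, c)) \<in> ewall_E l"
  using assms unfolding ewall_E_def by simp

lemma ewall_E_down_even_row:
  assumes "even r" "1 \<le> r" "r < 2 * l" "odd c" "c \<le> 2 * l"
  shows "((r, c), (r + 1, c)) \<in> ewall_E l"
  using assms odd_pos[of c] unfolding ewall_E_def by simp

lemma ewall_E_wrap:
  assumes "odd c" "c \<le> 2 * l"
  shows "((2 * l, c), (1, c)) \<in> ewall_E l"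
  using assms odd_pos[of c] unfolding ewall_E_def by simp

lemma ewall_E_ends_in_ewall_V:
  assumes "e \<in> ewall_E l"
  shows "fst e \<in> ewall_V l \<and> snd e \<in> ewall_V l"
  using assms unfolding ewall_E_def ewall_V_def by (auto; presburger)

lemma set_subset_hd_last_inner: "set p \<subseteq> {hd p, last p} \<union> inner p"
proof (cases p rule: rev_cases)
  case (snoc q y)
  then show ?thesis
    by (cases q) (auto simp: inner_def)
qed simp

lemma inner_subset_set: "inner p \<subseteq> set p"
  by (cases p) (auto simp: inner_def dest: in_set_butlastD)

definition induced_edges :: "nat \<Rightarrow> (nat \<times> nat) set \<Rightarrow> ((nat \<times> nat) \<times> (nat \<times> nat)) set" where
  "induced_edges l W = {e \<in> ewall_E l. fst e \<in> W \<and> snd e \<in> W}"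

definition column :: "nat \<Rightarrow> nat \<Rightarrow> (nat \<times> nat) set" where
  "column l j = {(r, c) \<in> ewall_V l. c = 2 * j - 1 \<or> c = 2 * j}"

definition row_segment :: "nat \<Rightarrow> nat \<Rightarrow> nat \<Rightarrow> (nat \<times> nat) set" where
  "row_segment r lo hi = {(r, c) | c. lo \<le> c \<and> c \<le> hi}"

definition column_walk :: "nat \<Rightarrow> nat \<Rightarrow> nat \<times> nat" where
  "column_walk j n = (let r = 2 * (n div 4) + 1 in
      if n mod 4 = 0 then (r, 2 * j - 1) else if n mod 4 = 1 then (r, 2 * j)
      else if n mod 4 = 2 then (r + 1, 2 * j) else (r + 1, 2 * j - 1))"

lemma column_walk_simps:
  "column_walk j (4 * q) = (2 * q + 1, 2 * j - 1)"
  "column_walk j (4 * q + 1) = (2 * q + 1, 2 * j)"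
  "column_walk j (4 * q + 2) = (2 * q + 2, 2 * j)"
  "column_walk j (4 * q + 3) = (2 * q + 2, 2 * j - 1)"
proof -
  have "(4 * q + t) div 4 = q \<and> (4 * q + t) mod 4 = t" if "t < 4" for t :: nat
    using that by simp
  from this[of 0] this[of 1] this[of 2] this[of 3] show
    "column_walk j (4 * q) = (2 * q + 1, 2 * j - 1)"
    "column_walk j (4 * q + 1) = (2 * q + 1, 2 * j)"
    "column_walk j (4 * q + 2) = (2 * q + 2, 2 * j)"
    "column_walk j (4 * q + 3) = (2 * q + 2, 2 * j - 1)"
    unfolding column_walk_def by simp_all
qed

lemma nat_cases_mod_4: "\<exists>q. n = 4 * q \<or> n = 4 * q + 1 \<or> n = 4 * q + 2 \<or> n = 4 * q + 3"
  for n :: nat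
  by presburger

lemma column_walk_in_column:
  assumes "1 \<le> j" "j \<le> l" "n < 4 * l"
  shows "column_walk j n \<in> column l j"
  using nat_cases_mod_4[of n] assms
  by (auto simp: column_walk_simps[simplified] column_def ewall_V_def)

lemma column_walk_edge_Suc:
  assumes j: "1 \<le> j" "j \<le> l" and n: "Suc n < 4 * l"
  shows "(column_walk j n, column_walk j (Suc n)) \<in> ewall_E l"
proof -
  obtain q where "n = 4 * q \<or> n = 4 * q + 1 \<or> n = 4 * q + 2 \<or> n = 4 * q + 3"
    using nat_cases_mod_4 by blast
  then consider "n = 4 * q" | "n = 4 * q + 1" | "n = 4 * q + 2" | "n = 4 * q + 3"
    by blast
  then show ?thesis
  proof cases
    case 1
    have "Suc n = 4 * q + 1" "1 \<le> 2 * j - 1" "2 * j - 1 < 2 * l" "2 * j - 1 + 1 = 2 * j"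
      using 1 j by auto
    then show ?thesis
      using 1 n ewall_E_right[where r = "2 * q + 1" and c = "2 * j - 1" and l = l]
      by (simp only: column_walk_simps) simp
  next
    case 2
    have "Suc n = 4 * q + 2"
      using 2 by simp
    then show ?thesis
      using 2 n j ewall_E_down_odd_row[where r = "2 * q + 1" and c = "2 * j" and l = l]
      by (simp only: column_walk_simps) simp
  next
    case 3
    have "Suc n = 4 * q + 3" "1 \<le> 2 * j - 1" "2 * j - 1 < 2 * l" "2 * j - 1 + 1 = 2 * j"
      using 3 j by auto
    then show ?thesis
      using 3 n ewall_E_left[where r = "2 * q + 2" and c = "2 * j - 1" and l = l]
      by (simp only: column_walk_simps) simp
  next
    case 4
    have "Suc n = 4 * Suc q"
      using 4 by simp
    then show ?thesis
      using 4 n j ewall_E_down_even_row[where r = "2 * q + 2" and c = "2 * j - 1" and l = l]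
      by (simp only: column_walk_simps) simp
  qed
qed

lemma column_walk_edge_wrap:
  assumes "1 \<le> j" "j \<le> l"
  shows "(column_walk j (4 * l - 1), column_walk j 0) \<in> ewall_E l"
proof -
  have "4 * l - 1 = 4 * (l - 1) + 3" "2 * (l - 1) + 2 = 2 * l"
    using assms by auto
  moreover have "column_walk j 0 = (1, 2 * j - 1)"
    using column_walk_simps(1)[of j 0] by simp
  ultimately show ?thesis
    using assms ewall_E_wrap[where c = "2 * j - 1" and l = l]
    by (simp only: column_walk_simps) simp
qed

lemma column_walk_edge:
  assumes "1 \<le> j" "j \<le> l" "n < 4 * l"
  shows "(column_walk j n, column_walk j (Suc n mod (4 * l))) \<in> ewall_E l"
proof (cases "Suc n < 4 * l")
  case True
  then show ?thesis
    using column_walk_edge_Suc assms by simp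
next
  case False
  then have "Suc n = 4 * l"
    using assms(3) by simp
  then have "n = 4 * l - 1" "Suc n mod (4 * l) = 0"
    by simp_all
  then show ?thesis
    using column_walk_edge_wrap assms by simp
qed

lemma column_subset_column_walk: "column l j \<subseteq> column_walk j ` {..<4 * l}"
proof
  fix v assume "v \<in> column l j"
  then obtain r c where v: "v = (r, c)" "1 \<le> r" "r \<le> 2 * l" "c = 2 * j - 1 \<or> c = 2 * j"
    by (auto simp: column_def ewall_V_def)
  have "\<exists>q. r = 2 * q + 1 \<or> r = 2 * q + 2"
    using \<open>1 \<le> r\<close> by presburger
  then obtain q where q: "r = 2 * q + 1 \<or> r = 2 * q + 2" ..
  then have "v \<in> column_walk j ` {4 * q, 4 * q + 1, 4 * q + 2, 4 * q + 3}"
    using v column_walk_simps[of j q] by auto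
  moreover have "q < l"
    using q v by linarith
  then have "{4 * q, 4 * q + 1, 4 * q + 2, 4 * q + 3} \<subseteq> {..<4 * l}"
    by auto
  ultimately show "v \<in> column_walk j ` {..<4 * l}"
    by blast
qed

lemma column_strongly_connected:
  assumes "1 \<le> j" "j \<le> l" "w \<in> column l j" "w' \<in> column l j"
  shows "(w, w') \<in> (induced_edges l (column l j))\<^sup>*"
proof -
  have "(column_walk j n, column_walk j (Suc n mod (4 * l))) \<in> induced_edges l (column l j)"
    if "n < 4 * l" for n
    using that assms(1,2) column_walk_edge column_walk_in_column
    by (simp add: induced_edges_def)
  moreover obtain n n' where "n < 4 * l" "w = column_walk j n" "n' < 4 * l" "w' = column_walk j n'"
    using assms(3,4) column_subset_column_walk by blast
  ultimately show ?thesis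
    using cycle_in_rtrancl[of "4 * l" "column_walk j"] by simp
qed

lemma odd_row_reach:
  assumes "odd r" "1 \<le> r" "r \<le> 2 * l" "1 \<le> lo" "lo \<le> hi" "hi \<le> 2 * l"
  shows "((r, lo), (r, hi)) \<in> (induced_edges l (row_segment r lo hi))\<^sup>*"
proof -
  have "((r, lo + d), (r, lo + Suc d)) \<in> induced_edges l (row_segment r lo hi)" if "d < hi - lo" for d
    using that assms ewall_E_right[where r = r and c = "lo + d" and l = l]
    by (simp add: induced_edges_def row_segment_def; arith)
  then show ?thesis
    using chain_in_rtrancl[of "hi - lo" "\<lambda>d. (r, lo + d)"] assms by simp
qed

lemma even_row_reach:
  assumes "even r" "1 \<le> r" "r \<le> 2 * l" "1 \<le> lo" "lo \<le> hi" "hi \<le> 2 * l"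
  shows "((r, hi), (r, lo)) \<in> (induced_edges l (row_segment r lo hi))\<^sup>*"
proof -
  have "((r, hi - d), (r, hi - Suc d)) \<in> induced_edges l (row_segment r lo hi)" if "d < hi - lo" for d
  proof -
    have "hi - d = (hi - Suc d) + 1"
      using that by simp
    then show ?thesis
      using that assms ewall_E_left[where r = r and c = "hi - Suc d" and l = l]
      by (simp add: induced_edges_def row_segment_def; arith)
  qed
  then show ?thesis
    using chain_in_rtrancl[of "hi - lo" "\<lambda>d. (r, hi - d)"] assms by simp
qed

lemma S_k_order_facts:
  assumes "s \<in> S_k V E k" "finite V"
  shows "dsep V E (fst s) (snd s)" "finite (fst s \<inter> snd s)" "card (fst s \<inter> snd s) < k"
proof -
  show sep: "dsep V E (fst s) (snd s)" "card (fst s \<inter> snd s) < k"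
    using assms(1) by (auto simp: S_k_def)
  have "fst s \<inter> snd s \<subseteq> V"
    using sep(1) by (auto simp: dsep_def)
  then show "finite (fst s \<inter> snd s)"
    using assms(2) by (rule finite_subset)
qed

definition wall_part :: "nat \<Rightarrow> (nat \<times> nat \<Rightarrow> 'a)
    \<Rightarrow> ((nat \<times> nat) \<times> (nat \<times> nat) \<Rightarrow> 'a list) \<Rightarrow> (nat \<times> nat) set \<Rightarrow> 'a set" where
  "wall_part l \<phi> P W = \<phi> ` W \<union> (\<Union>e \<in> induced_edges l W. inner (P e))"

lemma vert_cycle_eq_wall_part: "vert_cycle l \<phi> P j = wall_part l \<phi> P (column l j)"
proof -
  have "{((r, c), (r', c')) \<in> ewall_E l. (c = 2 * j - 1 \<or> c = 2 * j) \<and> (c' = 2 * j - 1 \<or> c' = 2 * j)}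
      = induced_edges l (column l j)"
    by (auto simp: induced_edges_def column_def dest: ewall_E_ends_in_ewall_V)
  then show ?thesis
    by (simp add: vert_cycle_def wall_part_def column_def)
qed

lemma column_disjoint: "i \<noteq> j \<Longrightarrow> column l i \<inter> column l j = {}"
  by (auto simp: column_def ewall_V_def)

context
  fixes V :: "'a set" and E and l and \<phi> :: "nat \<times> nat \<Rightarrow> 'a" and P
  assumes wall: "cyl_wall V E l \<phi> P"
begin

lemma wall_branch_vertices: "inj_on \<phi> (ewall_V l)" "\<phi> ` ewall_V l \<subseteq> V"
  using wall unfolding cyl_wall_def by blast+

lemma wall_path:
  assumes "e \<in> ewall_E l"
  shows "dipath E (P e)" "set (P e) \<subseteq> V" "hd (P e) = \<phi> (fst e)" "last (P e) = \<phi> (snd e)"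
  using wall assms unfolding cyl_wall_def by blast+

lemma set_wall_path_subset_wall_part:
  assumes "e \<in> induced_edges l W"
  shows "set (P e) \<subseteq> wall_part l \<phi> P W"
  using assms set_subset_hd_last_inner[of "P e"] wall_path(3,4)[of e]
  by (auto simp: wall_part_def induced_edges_def)

lemma wall_part_subset:
  assumes "W \<subseteq> ewall_V l"
  shows "wall_part l \<phi> P W \<subseteq> V"
proof -
  have "\<phi> ` W \<subseteq> V"
    using assms wall_branch_vertices(2) by blast
  moreover have "inner (P e) \<subseteq> V" if "e \<in> induced_edges l W" for e
    using that wall_path(2)[of e] inner_subset_set[of "P e"] by (auto simp: induced_edges_def)
  ultimately show ?thesis
    unfolding wall_part_def by blast
qed

lemma wall_inner_disjoint_branch: "e \<in> ewall_E l \<Longrightarrow> inner (P e) \<inter> \<phi> ` ewall_V l = {}"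
  using wall unfolding cyl_wall_def by blast

lemma wall_inner_disjoint:
  "e \<in> ewall_E l \<Longrightarrow> e' \<in> ewall_E l \<Longrightarrow> e \<noteq> e' \<Longrightarrow> inner (P e) \<inter> inner (P e') = {}"
  using wall unfolding cyl_wall_def by blast

lemma wall_part_disjoint:
  assumes W: "W \<subseteq> ewall_V l" and W': "W' \<subseteq> ewall_V l" and "W \<inter> W' = {}"
  shows "wall_part l \<phi> P W \<inter> wall_part l \<phi> P W' = {}"
proof -
  let ?U = "\<lambda>W. \<Union>e \<in> induced_edges l W. inner (P e)"
  have "\<phi> ` W \<inter> \<phi> ` W' = {}"
    using assms wall_branch_vertices(1) by (auto dest: inj_onD)
  moreover have "\<phi> ` W \<inter> ?U W' = {}" "?U W \<inter> \<phi> ` W' = {}"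
    using wall_inner_disjoint_branch W W' by (fastforce simp: induced_edges_def)+
  moreover have "?U W \<inter> ?U W' = {}"
  proof -
    have "e \<noteq> e'" if "e \<in> induced_edges l W" "e' \<in> induced_edges l W'" for e e'
      using that \<open>W \<inter> W' = {}\<close> by (auto simp: induced_edges_def)
    then show ?thesis
      using wall_inner_disjoint by (fastforce simp: induced_edges_def)
  qed
  ultimately show ?thesis
    unfolding wall_part_def by (simp only: Int_Un_distrib Int_Un_distrib2 Un_empty)
qed

lemma wall_path_avoiding_separator:
  assumes "wall_part l \<phi> P W \<inter> (A \<inter> B) = {}" "e \<in> induced_edges l W"
  shows "set (P e) \<subseteq> V - A \<inter> B"
  using assms wall_path(2)[of e] set_wall_path_subset_wall_part[OF assms(2)]
  by (auto simp: induced_edges_def)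

lemma wall_path_subset_B_minus_A:
  assumes sep: "dsep V E A B" and avoid: "wall_part l \<phi> P W \<inter> (A \<inter> B) = {}"
    and e: "e \<in> induced_edges l W" and start: "\<phi> (fst e) \<in> B - A"
  shows "set (P e) \<subseteq> B - A"
proof -
  have "e \<in> ewall_E l"
    using e by (simp add: induced_edges_def)
  then show ?thesis
    using dsep_dipath_subset_B_minus_A[OF sep wall_path(1) wall_path_avoiding_separator[OF avoid e]]
      wall_path(3) start by simp
qed

lemma wall_path_end_in_B_minus_A:
  assumes sep: "dsep V E A B" and avoid: "wall_part l \<phi> P W \<inter> (A \<inter> B) = {}"
    and e: "e \<in> induced_edges l W" and x: "x \<in> set (P e)" "x \<in> B - A"
  shows "\<phi> (snd e) \<in> B - A"
proof -
  have "e \<in> ewall_E l"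
    using e by (simp add: induced_edges_def)
  then show ?thesis
    using dsep_dipath_last_in_B_minus_A[OF sep wall_path(1) wall_path_avoiding_separator[OF avoid e] x]
      wall_path(4) by simp
qed

lemma wall_reach_stays_in_B_minus_A:
  assumes sep: "dsep V E A B" and avoid: "wall_part l \<phi> P W \<inter> (A \<inter> B) = {}"
    and "(w, w') \<in> (induced_edges l W)\<^sup>*" and "\<phi> w \<in> B - A"
  shows "\<phi> w' \<in> B - A"
  using assms(3)
proof (induction rule: rtrancl_induct)
  case base
  then show ?case using assms(4) .
next
  case (step u v)
  have "last (P (u, v)) \<in> set (P (u, v))"
    using wall_path(1)[of "(u, v)"] step.hyps(2) by (simp add: dipath_def induced_edges_def)
  then show ?case
    using wall_path_subset_B_minus_A[OF sep avoid step.hyps(2)] step.IH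
      wall_path_end_in_B_minus_A[OF sep avoid step.hyps(2)] by auto
qed

lemma wall_part_meets_separator:
  assumes "dsep V E A B" "(w, w') \<in> (induced_edges l W)\<^sup>*" "\<phi> w \<in> B - A" "\<phi> w' \<notin> B - A"
  shows "wall_part l \<phi> P W \<inter> (A \<inter> B) \<noteq> {}"
  using wall_reach_stays_in_B_minus_A assms by blast

lemma vert_cycle_subset: "vert_cycle l \<phi> P j \<subseteq> V"
  unfolding vert_cycle_eq_wall_part by (rule wall_part_subset) (auto simp: column_def)

lemma vert_cycle_disjoint: "i \<noteq> j \<Longrightarrow> vert_cycle l \<phi> P i \<inter> vert_cycle l \<phi> P j = {}"
  unfolding vert_cycle_eq_wall_part
  by (rule wall_part_disjoint) (auto simp: column_def column_disjoint)

lemma branch_vertex_in_vert_cycle: "w \<in> column l j \<Longrightarrow> \<phi> w \<in> vert_cycle l \<phi> P j"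
  by (simp add: vert_cycle_eq_wall_part wall_part_def)

lemma vert_cycle_nonempty: "j \<in> {1..l} \<Longrightarrow> vert_cycle l \<phi> P j \<noteq> {}"
  using branch_vertex_in_vert_cycle[of "(1, 2 * j)" j] by (auto simp: column_def ewall_V_def)

lemma vert_cycle_subset_B_minus_A:
  assumes sep: "dsep V E A B" and j: "j \<in> {1..l}"
    and avoid: "vert_cycle l \<phi> P j \<inter> (A \<inter> B) = {}"
    and w: "w \<in> column l j" "\<phi> w \<in> B - A"
  shows "vert_cycle l \<phi> P j \<subseteq> B - A"
proof -
  let ?W = "column l j"
  have avoid': "wall_part l \<phi> P ?W \<inter> (A \<inter> B) = {}"
    using avoid by (simp add: vert_cycle_eq_wall_part)
  have branch: "\<phi> w' \<in> B - A" if "w' \<in> ?W" for w'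
  proof -
    have "(w, w') \<in> (induced_edges l ?W)\<^sup>*"
      using column_strongly_connected j w(1) that by simp
    then show ?thesis
      using wall_reach_stays_in_B_minus_A[OF sep avoid'] w(2) by blast
  qed
  have "inner (P e) \<subseteq> B - A" if e: "e \<in> induced_edges l ?W" for e
  proof -
    have "set (P e) \<subseteq> B - A"
      using wall_path_subset_B_minus_A[OF sep avoid' e] branch e by (simp add: induced_edges_def)
    then show ?thesis
      by (rule subset_trans[OF inner_subset_set])
  qed
  then show ?thesis
    using branch unfolding vert_cycle_eq_wall_part wall_part_def by blast
qed

lemma vert_cycle_subset_A_minus_B:
  assumes sep: "dsep V E A B" and avoid: "vert_cycle l \<phi> P j \<inter> (A \<inter> B) = {}"
    and branch: "\<forall>w \<in> column l j. \<phi> w \<notin> B - A"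
  shows "vert_cycle l \<phi> P j \<subseteq> A - B"
proof -
  let ?W = "column l j"
  have avoid': "wall_part l \<phi> P ?W \<inter> (A \<inter> B) = {}"
    using avoid by (simp add: vert_cycle_eq_wall_part)
  have "x \<notin> B - A" if e: "e \<in> induced_edges l ?W" and x: "x \<in> inner (P e)" for e x
    using wall_path_end_in_B_minus_A[OF sep avoid' e] inner_subset_set[of "P e"] x branch e
    by (auto simp: induced_edges_def)
  then have "vert_cycle l \<phi> P j \<inter> (B - A) = {}"
    using branch unfolding vert_cycle_eq_wall_part wall_part_def by blast
  moreover have "vert_cycle l \<phi> P j \<subseteq> V - A \<inter> B"
    using vert_cycle_subset avoid by blast
  moreover have "A \<union> B = V"
    using sep by (simp add: dsep_def)
  ultimately show ?thesis
    by blast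
qed

lemma vert_cycle_on_one_side:
  assumes "dsep V E A B" "j \<in> {1..l}" "vert_cycle l \<phi> P j \<inter> (A \<inter> B) = {}"
  shows "vert_cycle l \<phi> P j \<subseteq> A - B \<or> vert_cycle l \<phi> P j \<subseteq> B - A"
  using vert_cycle_subset_B_minus_A[OF assms] vert_cycle_subset_A_minus_B[OF assms(1,3)] by blast

lemma even_row_meets_separator:
  assumes sep: "dsep V E A B" and ij: "1 \<le> i" "i < j" "j \<le> l" and m: "m \<in> {1..l}"
    and Qi: "vert_cycle l \<phi> P i \<subseteq> A - B" and Qj: "vert_cycle l \<phi> P j \<subseteq> B - A"
  shows "wall_part l \<phi> P (row_segment (2 * m) (2 * i) (2 * j - 1)) \<inter> (A \<inter> B) \<noteq> {}"
proof -
  have "(2 * m, 2 * j - 1) \<in> column l j" "(2 * m, 2 * i) \<in> column l i"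
    using m ij by (auto simp: column_def ewall_V_def)
  then have "\<phi> (2 * m, 2 * j - 1) \<in> B - A" "\<phi> (2 * m, 2 * i) \<notin> B - A"
    using branch_vertex_in_vert_cycle Qi Qj by blast+
  moreover have "((2 * m, 2 * j - 1), (2 * m, 2 * i))
      \<in> (induced_edges l (row_segment (2 * m) (2 * i) (2 * j - 1)))\<^sup>*"
    using even_row_reach[of "2 * m" l "2 * i" "2 * j - 1"] m ij by simp
  ultimately show ?thesis
    using wall_part_meets_separator[OF sep] by blast
qed

lemma odd_row_meets_separator:
  assumes sep: "dsep V E A B" and ij: "1 \<le> j" "j < i" "i \<le> l" and m: "m \<in> {1..l}"
    and Qi: "vert_cycle l \<phi> P i \<subseteq> A - B" and Qj: "vert_cycle l \<phi> P j \<subseteq> B - A"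
  shows "wall_part l \<phi> P (row_segment (2 * m - 1) (2 * j) (2 * i - 1)) \<inter> (A \<inter> B) \<noteq> {}"
proof -
  have "(2 * m - 1, 2 * j) \<in> column l j" "(2 * m - 1, 2 * i - 1) \<in> column l i"
    using m ij by (auto simp: column_def ewall_V_def)
  then have "\<phi> (2 * m - 1, 2 * j) \<in> B - A" "\<phi> (2 * m - 1, 2 * i - 1) \<notin> B - A"
    using branch_vertex_in_vert_cycle Qi Qj by blast+
  moreover have "odd (2 * m - 1)" "1 \<le> 2 * m - 1" "2 * m - 1 \<le> 2 * l" "2 * j \<le> 2 * i - 1"
    "2 * i - 1 \<le> 2 * l"
    using m ij by auto
  then have "((2 * m - 1, 2 * j), (2 * m - 1, 2 * i - 1))
      \<in> (induced_edges l (row_segment (2 * m - 1) (2 * j) (2 * i - 1)))\<^sup>*"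
    using odd_row_reach ij(1) by simp
  ultimately show ?thesis
    using wall_part_meets_separator[OF sep] by blast
qed

text \<open>Even rows run leftwards and odd rows rightwards: whichever of \<open>Q\<^sub>i, Q\<^sub>j\<close> lies further
  right, the \<open>l\<close> rows of one parity all lead from \<open>Q\<^sub>j\<close> to \<open>Q\<^sub>i\<close>.\<close>

lemma vert_cycles_not_on_opposite_sides:
  assumes sep: "dsep V E A B" and fin: "finite (A \<inter> B)" and small: "card (A \<inter> B) < l"
    and ij: "i \<in> {1..l}" "j \<in> {1..l}"
    and Qi: "vert_cycle l \<phi> P i \<subseteq> A - B" and Qj: "vert_cycle l \<phi> P j \<subseteq> B - A"
  shows False
proof -
  have "i \<noteq> j"
    using vert_cycle_nonempty[OF ij(2)] Qi Qj by blast
  define row where "row m = (if i < j then row_segment (2 * m) (2 * i) (2 * j - 1)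
    else row_segment (2 * m - 1) (2 * j) (2 * i - 1))" for m
  have "wall_part l \<phi> P (row m) \<inter> (A \<inter> B) \<noteq> {}" if "m \<in> {1..l}" for m
    using even_row_meets_separator[OF sep _ _ _ that Qi Qj]
      odd_row_meets_separator[OF sep _ _ _ that Qi Qj] ij \<open>i \<noteq> j\<close>
    by (auto simp: row_def)
  moreover have "wall_part l \<phi> P (row m) \<inter> wall_part l \<phi> P (row m') = {}"
    if "m \<in> {1..l}" "m' \<in> {1..l}" "m \<noteq> m'" for m m'
    using that ij by (intro wall_part_disjoint) (auto simp: row_def row_segment_def ewall_V_def)
  ultimately have "card {1..l} \<le> card (A \<inter> B)"
    by (rule card_le_card_if_disjoint_family_meets[OF fin])
  then show False
    using small by simp
qed

lemma exists_vert_cycle_avoiding: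
  assumes "finite Z" "card Z < l"
  shows "\<exists>j \<in> {1..l}. vert_cycle l \<phi> P j \<inter> Z = {}"
proof (rule ccontr)
  assume "\<not> ?thesis"
  then have "card {1..l} \<le> card Z"
    using card_le_card_if_disjoint_family_meets[OF assms(1), of "{1..l}" "vert_cycle l \<phi> P"]
      vert_cycle_disjoint by blast
  then show False
    using assms(2) by simp
qed

lemma avoiding_vert_cycle_in_wall_side:
  assumes sep: "dsep V E (fst s) (snd s)" "finite (fst s \<inter> snd s)" "card (fst s \<inter> snd s) < l"
    and X: "wall_side l \<phi> P s X" and j: "j \<in> {1..l}"
    and avoid: "vert_cycle l \<phi> P j \<inter> (fst s \<inter> snd s) = {}"
  shows "vert_cycle l \<phi> P j \<subseteq> X - fst s \<inter> snd s"
proof -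
  obtain i where i: "i \<in> {1..l}" "vert_cycle l \<phi> P i \<subseteq> X - fst s \<inter> snd s"
    and X_side: "X = fst s \<or> X = snd s"
    using X by (auto simp: wall_side_def)
  consider "vert_cycle l \<phi> P j \<subseteq> fst s - snd s" | "vert_cycle l \<phi> P j \<subseteq> snd s - fst s"
    using vert_cycle_on_one_side[OF sep(1) j avoid] by blast
  then show ?thesis
  proof cases
    case 1
    show ?thesis
    proof (cases "X = fst s")
      case False
      then have "vert_cycle l \<phi> P i \<subseteq> snd s - fst s"
        using i(2) X_side by blast
      then show ?thesis
        using vert_cycles_not_on_opposite_sides[OF sep j i(1) 1] by blast
    qed (use 1 in blast)
  next
    case 2
    show ?thesis
    proof (cases "X = snd s")
      case False
      then have "vert_cycle l \<phi> P i \<subseteq> fst s - snd s"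
        using i(2) X_side by blast
      then show ?thesis
        using vert_cycles_not_on_opposite_sides[OF sep i(1) j _ 2] by blast
    qed (use 2 in blast)
  qed
qed

lemma ex1_wall_side:
  assumes sep: "dsep V E (fst s) (snd s)" "finite (fst s \<inter> snd s)" "card (fst s \<inter> snd s) < l"
  shows "\<exists>!X. wall_side l \<phi> P s X"
proof -
  obtain j where j: "j \<in> {1..l}" and avoid: "vert_cycle l \<phi> P j \<inter> (fst s \<inter> snd s) = {}"
    using exists_vert_cycle_avoiding[OF sep(2,3)] by blast
  have "fst s - snd s = fst s - fst s \<inter> snd s" "snd s - fst s = snd s - fst s \<inter> snd s"
    by blast+
  then have "wall_side l \<phi> P s (fst s) \<or> wall_side l \<phi> P s (snd s)"
    using vert_cycle_on_one_side[OF sep(1) j avoid] j unfolding wall_side_def by (metis insertI1 insertI2)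
  then have "\<exists>X. wall_side l \<phi> P s X"
    by blast
  moreover have "X = Y" if "wall_side l \<phi> P s X" "wall_side l \<phi> P s Y" for X Y
  proof (rule ccontr)
    assume "X \<noteq> Y"
    then have "(X - fst s \<inter> snd s) \<inter> (Y - fst s \<inter> snd s) = {}"
      using that by (auto simp: wall_side_def)
    then show False
      using avoiding_vert_cycle_in_wall_side[OF sep _ j avoid] that vert_cycle_nonempty[OF j]
      by blast
  qed
  ultimately show ?thesis
    by blast
qed

lemma wall_side_big_W:
  assumes "dsep V E (fst s) (snd s)" "finite (fst s \<inter> snd s)" "card (fst s \<inter> snd s) < l"
  shows "wall_side l \<phi> P s (big_W l \<phi> P s)"
  unfolding big_W_def using ex1_wall_side[OF assms] by (rule theI')

lemma avoiding_vert_cycle_misses_small_side: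
  assumes sep: "dsep V E (fst s) (snd s)" "finite (fst s \<inter> snd s)" "card (fst s \<inter> snd s) < l"
    and j: "j \<in> {1..l}" and avoid: "vert_cycle l \<phi> P j \<inter> (fst s \<inter> snd s) = {}"
  shows "vert_cycle l \<phi> P j \<inter> small_side (big_W l \<phi> P) s = {}"
proof -
  have big: "wall_side l \<phi> P s (big_W l \<phi> P s)"
    using sep by (rule wall_side_big_W)
  then have "big_W l \<phi> P s \<in> {fst s, snd s}"
    by (simp add: wall_side_def)
  then show ?thesis
    using avoiding_vert_cycle_in_wall_side[OF sep big j avoid]
    by (auto simp: small_side_def)
qed

lemma big_W_is_tangle:
  assumes fin: "finite V" and kl: "3 * k \<le> l"
  shows "is_tangle V E k (big_W l \<phi> P)"
  unfolding is_tangle_def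
proof (intro conjI ballI)
  fix s assume s: "s \<in> S_k V E k"
  have "wall_side l \<phi> P s (big_W l \<phi> P s)"
    using S_k_order_facts[OF s fin] kl by (intro wall_side_big_W) auto
  then show "big_W l \<phi> P s \<in> {fst s, snd s}"
    by (simp add: wall_side_def)
next
  fix s1 s2 s3 assume s: "s1 \<in> S_k V E k" "s2 \<in> S_k V E k" "s3 \<in> S_k V E k"
  let ?sep = "\<lambda>s. fst s \<inter> snd s"
  have sep: "dsep V E (fst s) (snd s)" "finite (?sep s)" "card (?sep s) < k"
    if "s \<in> {s1, s2, s3}" for s
    using S_k_order_facts[OF _ fin] s that by auto
  let ?Z = "?sep s1 \<union> ?sep s2 \<union> ?sep s3"
  have "card ?Z \<le> card (?sep s1) + card (?sep s2) + card (?sep s3)"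
    by (meson card_Un_le add_right_mono order_trans)
  then have "card ?Z < l"
    using sep(3)[of s1] sep(3)[of s2] sep(3)[of s3] kl by simp
  then obtain j where j: "j \<in> {1..l}" and avoid: "vert_cycle l \<phi> P j \<inter> ?Z = {}"
    using exists_vert_cycle_avoiding sep(2) by (metis finite_Un insertI1 insertI2 singletonI)
  obtain x where x: "x \<in> vert_cycle l \<phi> P j"
    using vert_cycle_nonempty[OF j] by blast
  have "x \<notin> small_side (big_W l \<phi> P) s" if "s \<in> {s1, s2, s3}" for s
    using avoiding_vert_cycle_misses_small_side[OF sep(1,2)[OF that] _ j] sep(3)[OF that] kl avoid x that
    by auto
  moreover have "x \<in> V"
    using x vert_cycle_subset by blast
  ultimately show "small_side (big_W l \<phi> P) s1 \<union> small_side (big_W l \<phi> P) s2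
      \<union> small_side (big_W l \<phi> P) s3 \<noteq> V"
    by blast
qed

end

theorem lemma9p2:
  fixes V :: "'a set" and E :: "('a \<times> 'a) set" and k l :: nat
    and \<phi> :: "nat \<times> nat \<Rightarrow> 'a" and P :: "(nat \<times> nat) \<times> (nat \<times> nat) \<Rightarrow> 'a list"
  assumes "digraph V E" and "k \<ge> 1" and "l \<ge> 3 * k"
    and "cyl_wall V E l \<phi> P"
  shows "(\<forall>s \<in> S_k V E k. \<exists>!X. wall_side l \<phi> P s X)
         \<and> is_tangle V E k (big_W l \<phi> P)"
proof
  have fin: "finite V"
    using assms(1) by (simp add: digraph_def)
  show "\<forall>s \<in> S_k V E k. \<exists>!X. wall_side l \<phi> P s X"
  proof
    fix s assume s: "s \<in> S_k V E k"
    show "\<exists>!X. wall_side l \<phi> P s X"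
      using S_k_order_facts[OF s fin] assms(3) by (intro ex1_wall_side[OF assms(4)]) auto
  qed
  show "is_tangle V E k (big_W l \<phi> P)"
    using big_W_is_tangle[OF assms(4) fin assms(3)] .
qed

end
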